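(* For every $m\ge 1$, the Zimin word $Z_m$ is minimal for the ai-semiring $\mathcal{B}_2^1$; that is, if $w$ is a word such that $\mathcal{B}_2^1$ satisfies the identity $w+Z_m=Z_m$, then $w=Z_m$.
   Context: Words are finite nonempty sequences of variables from a countably infinite set. Zimin words are defined by $Z_1=x_1$, $Z_{m+1}=Z_m x_{m+1} Z_m$ with distinct variables $x_1,x_2,\dots$. $B_2^1$ is the six-element monoid with zero $\{1,c,d,cd,dc,0\}$ presented as $\langle c,d\mid cdc=c,\ dcd=d,\ c^2=d^2=0\rangle$. $\mathcal{B}_2^1$ is the ai-semiring $(B_2^1,+,\cdot)$ where $+$ is the join for the partial order in which $0$ is the greatest element, $c,d,cd,dc$ are pairwise incomparable and all lie below $0$, $1<cd$, $1<dc$, and there are no other relations (so $c,d,1$ are minimal elements). An identity $p\leqslant p'$ means $p+p'=p'$; an identity holds in an ai-semiring if it holds under every substitution of elements for variables (words evaluated as products). *)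

theory Defs
  imports Main
begin

text \<open>Words: nonempty lists of variables; variable x_i is represented by the natural number i.\<close>
type_synonym word = "nat list"

fun zimin :: "nat \<Rightarrow> word" where
  "zimin 0 = []"
| "zimin (Suc m) = zimin m @ [Suc m] @ zimin m"

datatype B21 = One | C | D | CD | DC | Zero

text \<open>Nonidentity, nonzero elements as matrix units: c = e12, d = e21, cd = e11, dc = e22.\<close>
fun unit_idx :: "B21 \<Rightarrow> nat \<times> nat" where
  "unit_idx C = (1, 2)"
| "unit_idx D = (2, 1)"
| "unit_idx CD = (1, 1)"
| "unit_idx DC = (2, 2)"
| "unit_idx _ = (0, 0)"

fun of_idx :: "nat \<times> nat \<Rightarrow> B21" where
  "of_idx (i, j) =
     (if (i, j) = (1, 2) then C else if (i, j) = (2, 1) then D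
      else if (i, j) = (1, 1) then CD else DC)"

definition bmul :: "B21 \<Rightarrow> B21 \<Rightarrow> B21" where
  "bmul x y =
     (if x = One then y else if y = One then x
      else if x = Zero \<or> y = Zero then Zero
      else if snd (unit_idx x) = fst (unit_idx y)
           then of_idx (fst (unit_idx x), snd (unit_idx y))
           else Zero)"

text \<open>Addition: join for the order with 0 on top, 1 < cd, 1 < dc, and c, d, cd, dc pairwise incomparable.\<close>
definition badd :: "B21 \<Rightarrow> B21 \<Rightarrow> B21" where
  "badd x y =
     (if x = y then x
      else if x = One \<and> (y = CD \<or> y = DC) then y
      else if y = One \<and> (x = CD \<or> x = DC) then x
      else Zero)"

definition beval :: "(nat \<Rightarrow> B21) \<Rightarrow> word \<Rightarrow> B21" where
  "beval \<phi> w = foldr (\<lambda>x acc. bmul (\<phi> x) acc) w One"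

definition B21_sat_le :: "word \<Rightarrow> word \<Rightarrow> bool" where
  "B21_sat_le p q \<longleftrightarrow> (\<forall>\<phi>. badd (beval \<phi> p) (beval \<phi> q) = beval \<phi> q)"

end

theory Submission
  imports Defs
begin

text \<open>Under the substitution sending x_1 to c and every other variable to d, a word takes
  the value c exactly when it has the form x_1 y_1 x_1 y_2 ... y_k x_1 with all y_i different
  from x_1. The Zimin word Z_m has this form, and c is minimal in the order, so every w with
  w \<le> Z_m has it too. Substituting 1 for x_1 shows that deleting x_1 from both sides preserves
  the identity; Z_m with x_1 deleted is a renamed copy of Z_(m-1), so by induction w with x_1
  deleted equals it. Finally a word of the above form is determined by what remains after
  deleting x_1.\<close>

lemma bmul_simps [simp]:
  "bmul One y = y" "bmul x One = x" "bmul Zero y = Zero" "bmul x Zero = Zero"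
  "bmul C C = Zero" "bmul C D = CD" "bmul C CD = Zero" "bmul C DC = C"
  "bmul D C = DC" "bmul D D = Zero" "bmul D CD = D" "bmul D DC = Zero"
  "bmul CD C = C" "bmul CD D = Zero" "bmul CD CD = CD" "bmul CD DC = Zero"
  "bmul DC C = Zero" "bmul DC D = D" "bmul DC CD = Zero" "bmul DC DC = DC"
  by (cases x; simp add: bmul_def)+

lemma badd_eq_minimal:
  assumes "x \<in> {One, C, D}" and "badd y x = x"
  shows "y = x"
  using assms by (cases y) (auto simp: badd_def)

lemma beval_Nil [simp]: "beval f [] = One"
  by (simp add: beval_def)

lemma beval_Cons [simp]: "beval f (x # u) = bmul (f x) (beval f u)"
  by (simp add: beval_def)

lemma beval_eq_One_imp_Nil:
  assumes "beval f u = One" and "\<And>x. f x \<noteq> One"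
  shows "u = []"
proof (cases u)
  case (Cons x u')
  then show ?thesis
    using assms by (cases "f x"; cases "beval f u'") auto
qed

lemma beval_fun_upd_One: "beval (f(a := One)) u = beval f (removeAll a u)"
  by (induction u) auto

lemma B21_sat_le_Nil:
  assumes "B21_sat_le w []"
  shows "w = []"
proof -
  have "badd (beval (\<lambda>_. C) w) One = One"
    using assms by (simp add: B21_sat_le_def)
  then have "beval (\<lambda>_. C) w = One"
    by (simp add: badd_eq_minimal)
  then show ?thesis
    by (rule beval_eq_One_imp_Nil) simp
qed

lemma B21_sat_le_removeAll:
  assumes "B21_sat_le w u"
  shows "B21_sat_le (removeAll a w) (removeAll a u)"
  unfolding B21_sat_le_def
proof
  fix f
  show "badd (beval f (removeAll a w)) (beval f (removeAll a u)) = beval f (removeAll a u)"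
    using assms[unfolded B21_sat_le_def, rule_format, of "f(a := One)"]
    by (simp add: beval_fun_upd_One)
qed

fun alternating :: "nat \<Rightarrow> word \<Rightarrow> bool" where
  "alternating a [] = False"
| "alternating a [x] = (x = a)"
| "alternating a (x # y # u) = (x = a \<and> y \<noteq> a \<and> alternating a u)"

lemma alternating_append:
  "alternating a u \<Longrightarrow> alternating a v \<Longrightarrow> b \<noteq> a \<Longrightarrow> alternating a (u @ b # v)"
  by (induction a u rule: alternating.induct) auto

lemma alternating_removeAll_inj:
  "alternating a u \<Longrightarrow> alternating a v \<Longrightarrow> removeAll a u = removeAll a v \<Longrightarrow> u = v"
proof (induction a u arbitrary: v rule: alternating.induct)
  case (2 a x)
  then show ?case by (cases "(a, v)" rule: alternating.cases) auto
next
  case (3 a x y u)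
  then show ?case by (cases "(a, v)" rule: alternating.cases) auto
qed auto

definition c_at :: "nat \<Rightarrow> nat \<Rightarrow> B21" where
  "c_at a x = (if x = a then C else D)"

lemma c_at_simps [simp]: "c_at a a = C" "x \<noteq> a \<Longrightarrow> c_at a x = D"
  by (simp_all add: c_at_def)

lemma beval_c_at_eq_C: "beval (c_at a) u = C \<longleftrightarrow> alternating a u"
proof (induction a u rule: alternating.induct)
  case (3 a x y u)
  show ?case
    using 3 by (cases "x = a"; cases "y = a"; cases "beval (c_at a) u") auto
qed (auto simp: c_at_def)

lemma B21_sat_le_alternating:
  assumes "B21_sat_le w u" and "alternating a u"
  shows "alternating a w"
proof -
  have "badd (beval (c_at a) w) C = C"
    using assms B21_sat_le_def beval_c_at_eq_C by metis
  then show ?thesis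
    using badd_eq_minimal beval_c_at_eq_C by blast
qed

lemma removeAll_zimin: "removeAll (Suc 0) (zimin (Suc m)) = map Suc (zimin m)"
  by (induction m) auto

lemma alternating_zimin: "alternating (Suc 0) (zimin (Suc m))"
proof (induction m)
  case (Suc m)
  have "zimin (Suc (Suc m)) = zimin (Suc m) @ Suc (Suc m) # zimin (Suc m)"
    by simp
  with Suc show ?case
    by (simp add: alternating_append del: zimin.simps)
qed simp

lemma alternating_map_inj:
  "inj f \<Longrightarrow> alternating a u \<Longrightarrow> alternating (f a) (map f u)"
  by (induction a u rule: alternating.induct) (auto dest: injD)

lemma B21_sat_le_shifted_zimin:
  "B21_sat_le w (map ((+) k) (zimin m)) \<Longrightarrow> w = map ((+) k) (zimin m)"
proof (induction m arbitrary: k w)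
  case 0
  then show ?case by (simp add: B21_sat_le_Nil)
next
  case (Suc m)
  let ?z = "map ((+) k) (zimin (Suc m))"
  have removeAll_z: "removeAll (Suc k) ?z = map ((+) (Suc k)) (zimin m)"
    using map_removeAll_inj[of "(+) k" "Suc 0" "zimin (Suc m)"]
    by (simp add: removeAll_zimin comp_def cong: map_cong del: zimin.simps)
  have "alternating (Suc k) ?z"
    using alternating_map_inj[OF _ alternating_zimin, of "(+) k"] by simp
  moreover have "alternating (Suc k) w"
    using B21_sat_le_alternating[OF Suc.prems \<open>alternating (Suc k) ?z\<close>] .
  moreover have "removeAll (Suc k) w = removeAll (Suc k) ?z"
    using Suc.IH B21_sat_le_removeAll[OF Suc.prems] removeAll_z by metis
  ultimately show ?case
    using alternating_removeAll_inj by blast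
qed

theorem lemma3p7:
  fixes m :: nat and w :: word
  assumes "m \<ge> 1" and "w \<noteq> []" and "B21_sat_le w (zimin m)"
  shows "w = zimin m"
  using B21_sat_le_shifted_zimin[of w 0 m] assms(3) by (simp add: map_idI)

end
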